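(* Let $0<p<1$ and let $k\ge 1$ be an integer. A coin showing heads (H) with probability $p$ and tails (T) with probability $1-p$ is flipped independently until the string $\mathrm{H}^k\mathrm{T}$ ($k$ heads followed by a tails) first appears as consecutive flips; let $Y$ be the number of flips. Then $E(Y^0)=1$ and for every $n\ge 1$, \[ E(Y^n) = \sum_{j=1}^{n-1} \binom{n}{j} E(Y^j) \sum_{i=1}^k \frac{(1-p)\, i^{n-j}}{p^{k-i+1}} + \sum_{i=1}^\infty \frac{(1-p)\, i^n}{p^{k-i+1}} \] \[ = \sum_{j=1}^{n-1} \binom{n}{j} E(Y^j) \sum_{i=0}^n \frac{e_{n-j,i}\, p^i - e_{n-j,i}^k\, p^{k+i+1}}{(1-p)^{n-j}p^{k+1}} + \sum_{i=0}^n \frac{e_{n,i}\,p^i}{(1-p)^n p^{k+1}}. \]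
   Context: The Eulerian numbers $e_{n,i}$ are defined by $e_{0,0}=1$, $e_{n,i}=0$ whenever $i\le 0$ (unless $n=i=0$) or $i>n$, and $e_{n,i}=i\,e_{n-1,i}+(n-i+1)\,e_{n-1,i-1}$ otherwise. For the integer parameter $k$, $e^k_{0,0}=1$, $e^k_{n,i}=0$ whenever $i<0$ or $i>n$, and $e^k_{n,i}=(k+i+1)\,e^k_{n-1,i}+(n-k-i)\,e^k_{n-1,i-1}$ otherwise. *)

theory Defs
  imports "HOL-Probability.Probability"
begin

text \<open>Coin flips are modelled as an infinite stream of booleans, True = heads (H),
  False = tails (T), each independently True with probability p.\<close>

text \<open>Number of flips until the pattern H^k T first appears as consecutive flips
  (positions 0-based in the stream; flips m-k-1, ..., m-1 form the pattern).
  On the null event where the pattern never appears the value is 0 (LEAST default).\<close>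
definition hkt_time :: "nat \<Rightarrow> bool stream \<Rightarrow> nat" where
  "hkt_time k \<omega> = (LEAST m. k + 1 \<le> m \<and> (\<forall>i<k. \<omega> !! (m - k - 1 + i)) \<and> \<not> \<omega> !! (m - 1))"

fun eulerian :: "nat \<Rightarrow> nat \<Rightarrow> nat" where
  "eulerian 0 i = (if i = 0 then 1 else 0)"
| "eulerian (Suc n) i =
     (if i = 0 \<or> i > Suc n then 0
      else i * eulerian n i + (Suc n - i + 1) * eulerian n (i - 1))"

fun eulerian_k :: "int \<Rightarrow> nat \<Rightarrow> nat \<Rightarrow> int" where
  "eulerian_k k 0 i = (if i = 0 then 1 else 0)"
| "eulerian_k k (Suc n) i =
     (if i > Suc n then 0
      else (k + int i + 1) * eulerian_k k n i
         + (int (Suc n) - k - int i) * (if i = 0 then 0 else eulerian_k k n (i - 1)))"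

end

(*
  Condition on the position j of the first tail. If j < k, the heads before it are too few to
  complete the pattern and the flips after it start a fresh copy of the experiment, so
  Y = j + 1 + Y' with Y' distributed as Y; if j >= k, then Y = j + 1. The first tail is at j with
  probability p^j (1 - p), so expanding (j + 1 + Y')^n binomially turns E(Y^n) into a linear
  equation in the lower moments in which E(Y^n) itself has coefficient 1 - p^k. The remaining
  sums over j are moments of a geometric distribution, and sum_l (l + k + 1)^n x^l equals
  (sum_i e^k_{n,i} x^i) / (1 - x)^(n+1), with e_{n,i} = e^(-1)_{n,i}; this gives the Eulerian form.
  All moments are finite because E(z^Y) is finite for some z > 1, which follows from the same
  decomposition applied to z^min(Y, N).
*)

theory Submission
  imports Defs "HOL-Analysis.FPS_Convergence"
begin

section \<open>Generalised Eulerian numbers and power series\<close>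

lemma eulerian_k_eq_0: "n < i \<Longrightarrow> eulerian_k k n i = 0"
  by (induction n arbitrary: i) auto

lemma eulerian_eq_eulerian_k: "int (eulerian n i) = eulerian_k (-1) n i"
proof (induction n arbitrary: i)
  case (Suc n)
  show ?case
  proof (cases "i = 0 \<or> Suc n < i")
    case False
    then have "int (eulerian (Suc n) i) =
        int i * int (eulerian n i) + int (Suc n - i + 1) * int (eulerian n (i - 1))"
      by (simp del: add_Suc_right Nat.add_diff_assoc2)
    also have "int (Suc n - i + 1) = int (Suc n) - (-1) - int i"
      using False by auto
    finally show ?thesis
      using False by (simp del: of_nat_Suc add: Suc.IH)
  qed auto
qed simp

lemma eulerian_eq_0: "n < i \<Longrightarrow> eulerian n i = 0"
  using eulerian_eq_eulerian_k[of n i] eulerian_k_eq_0[of n i "-1"] by simp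

definition shifted_powers_fps :: "int \<Rightarrow> nat \<Rightarrow> 'a :: comm_ring_1 fps" where
  "shifted_powers_fps k n = Abs_fps (\<lambda>l. (of_nat l + of_int k + 1) ^ n)"

definition eulerian_k_fps :: "int \<Rightarrow> nat \<Rightarrow> 'a :: comm_ring_1 fps" where
  "eulerian_k_fps k n = Abs_fps (\<lambda>i. of_int (eulerian_k k n i))"

lemma shifted_powers_fps_Suc:
  "shifted_powers_fps k (Suc n) =
     fps_const (of_int k + 1) * shifted_powers_fps k n + fps_X * fps_deriv (shifted_powers_fps k n)"
  by (rule fps_ext) (auto simp: shifted_powers_fps_def algebra_simps)

lemma eulerian_k_fps_Suc:
  "eulerian_k_fps k (Suc n) =
     fps_const (of_int k + 1) * (1 - fps_X) * eulerian_k_fps k n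
     + fps_const (of_nat (Suc n)) * fps_X * eulerian_k_fps k n
     + fps_X * (1 - fps_X) * fps_deriv (eulerian_k_fps k n)" (is "?L = ?R")
proof (rule fps_ext)
  fix i
  show "fps_nth ?L i = fps_nth ?R i"
    by (cases i) (auto simp: eulerian_k_fps_def eulerian_k_eq_0 algebra_simps)
qed

lemma shifted_powers_fps_times_one_minus_X_power:
  "shifted_powers_fps k n * (1 - fps_X) ^ Suc n = eulerian_k_fps k n"
proof (induction n)
  case 0
  show ?case
    by (rule fps_ext) (simp add: shifted_powers_fps_def eulerian_k_fps_def algebra_simps)
next
  case (Suc n)
  define A :: "'a fps" where "A = shifted_powers_fps k n"
  define P :: "'a fps" where "P = eulerian_k_fps k n"
  define D :: "'a fps" where "D = 1 - fps_X"
  have AP: "A * D ^ Suc n = P"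
    using Suc by (simp add: A_def P_def D_def)
  have "fps_deriv D = -1"
    by (simp add: D_def)
  then have "fps_deriv P = fps_deriv A * D ^ Suc n - fps_const (of_nat (Suc n)) * A * D ^ n"
    unfolding AP[symmetric]
    by (simp add: fps_deriv_power algebra_simps flip: fps_const_neg del: power_Suc of_nat_Suc)
  then have dAP: "fps_deriv A * D ^ Suc n = fps_deriv P + fps_const (of_nat (Suc n)) * A * D ^ n"
    by (simp add: algebra_simps)
  have "shifted_powers_fps k (Suc n) * D ^ Suc (Suc n)
      = fps_const (of_int k + 1) * D * (A * D ^ Suc n) + fps_X * D * (fps_deriv A * D ^ Suc n)"
    by (simp add: shifted_powers_fps_Suc A_def algebra_simps)
  also have "\<dots> = fps_const (of_int k + 1) * D * P + fps_X * D * fps_deriv P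
      + fps_const (of_nat (Suc n)) * fps_X * P"
    unfolding AP dAP by (simp add: AP[symmetric] algebra_simps)
  also have "\<dots> = eulerian_k_fps k (Suc n)"
    by (simp add: eulerian_k_fps_Suc P_def D_def algebra_simps)
  finally show ?case by (simp add: D_def)
qed

lemma fps_conv_radius_shifted_powers_fps:
  "fps_conv_radius (shifted_powers_fps k n :: 'a :: {banach, real_normed_field} fps) \<ge> 1"
proof (induction n)
  case 0
  have "fps_conv_radius (Abs_fps (\<lambda>_. 1 :: 'a)) \<ge> 1"
    unfolding fps_conv_radius_def
    by (rule conv_radius_geI_ex') (auto intro!: summable_geometric)
  then show ?case by (simp add: shifted_powers_fps_def)
next
  case (Suc n)
  have "fps_conv_radius (fps_const (of_int k + 1) * shifted_powers_fps k n :: 'a fps) \<ge> 1"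
    using Suc fps_conv_radius_mult[of "fps_const (of_int k + 1)" "shifted_powers_fps k n :: 'a fps"]
    by simp
  moreover have "fps_conv_radius (fps_X * fps_deriv (shifted_powers_fps k n) :: 'a fps) \<ge> 1"
    using Suc fps_conv_radius_mult[of fps_X "fps_deriv (shifted_powers_fps k n) :: 'a fps"]
      fps_conv_radius_deriv[of "shifted_powers_fps k n :: 'a fps"]
    by simp
  ultimately show ?case
    unfolding shifted_powers_fps_Suc by (intro order_trans[OF _ fps_conv_radius_add]) simp
qed

lemma sums_shifted_powers_geometric:
  fixes x :: "'a :: {banach, real_normed_field}"
  assumes "norm x < 1"
  shows "(\<lambda>l. (of_nat l + of_int k + 1) ^ n * x ^ l) sums
           ((\<Sum>i\<le>n. of_int (eulerian_k k n i) * x ^ i) / (1 - x) ^ Suc n)"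
proof -
  define A :: "'a fps" where "A = shifted_powers_fps k n"
  have "ereal (norm x) < 1"
    using assms by simp
  also have "1 \<le> fps_conv_radius A"
    unfolding A_def by (rule fps_conv_radius_shifted_powers_fps)
  finally have x: "ereal (norm x) < fps_conv_radius A" .
  have "eval_fps (eulerian_k_fps k n) x = eval_fps (A * (1 - fps_X) ^ Suc n) x"
    by (simp only: A_def shifted_powers_fps_times_one_minus_X_power)
  also have "\<dots> = eval_fps A x * (1 - x) ^ Suc n"
  proof -
    have D: "fps_conv_radius (1 - fps_X :: 'a fps) = \<infinity>"
      using fps_conv_radius_diff[of 1 "fps_X :: 'a fps"] by simp
    then have "fps_conv_radius ((1 - fps_X :: 'a fps) ^ Suc n) = \<infinity>"
      using fps_conv_radius_power[of "1 - fps_X :: 'a fps" "Suc n"] by simp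
    with x D show ?thesis
      by (simp add: eval_fps_mult eval_fps_power eval_fps_diff del: power_Suc)
  qed
  moreover have "(1 - x) ^ Suc n \<noteq> 0"
    using assms by auto
  ultimately have "eval_fps A x = eval_fps (eulerian_k_fps k n) x / (1 - x) ^ Suc n"
    by (simp add: eq_divide_eq del: power_Suc)
  also have "eval_fps (eulerian_k_fps k n) x = (\<Sum>i\<le>n. of_int (eulerian_k k n i) * x ^ i)"
    unfolding eval_fps_def eulerian_k_fps_def
    by (subst suminf_finite[of "{..n}"]) (auto simp: eulerian_k_eq_0)
  finally show ?thesis
    using sums_eval_fps[OF x] by (simp add: A_def shifted_powers_fps_def)
qed

lemma sums_Suc_power_eulerian:
  fixes x :: "'a :: {banach, real_normed_field}"
  assumes "1 \<le> n" "norm x < 1"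
  shows "(\<lambda>j. (of_nat j + 1) ^ n * x ^ Suc j) sums ((\<Sum>i\<le>n. of_nat (eulerian n i) * x ^ i) / (1 - x) ^ Suc n)"
proof -
  have "(\<lambda>l. of_nat l ^ n * x ^ l) sums ((\<Sum>i\<le>n. of_nat (eulerian n i) * x ^ i) / (1 - x) ^ Suc n)"
    using sums_shifted_powers_geometric[OF assms(2), of "-1" n]
    by (simp add: eulerian_eq_eulerian_k[symmetric])
  then have "(\<lambda>j. of_nat (Suc j) ^ n * x ^ Suc j) sums ((\<Sum>i\<le>n. of_nat (eulerian n i) * x ^ i) / (1 - x) ^ Suc n)"
    using assms(1) by (subst sums_Suc_iff) (simp add: power_0_left)
  then show ?thesis
    by (simp add: add.commute)
qed

lemma sum_lessThan_Suc_power_eulerian: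
  fixes x :: "'a :: {banach, real_normed_field}"
  assumes "1 \<le> n" "norm x < 1"
  shows "(\<Sum>j<N. (of_nat j + 1) ^ n * x ^ Suc j) =
    (\<Sum>i\<le>n. of_nat (eulerian n i) * x ^ i - of_int (eulerian_k (int N) n i) * x ^ (N + i + 1)) / (1 - x) ^ Suc n"
proof -
  define f where "f j = (of_nat j + 1) ^ n * x ^ Suc j" for j
  have "(\<lambda>l. x ^ Suc N * ((of_nat l + of_int (int N) + 1) ^ n * x ^ l)) sums
      (x ^ Suc N * ((\<Sum>i\<le>n. of_int (eulerian_k (int N) n i) * x ^ i) / (1 - x) ^ Suc n))"
    by (intro sums_mult sums_shifted_powers_geometric assms)
  then have tail: "(\<lambda>l. f (l + N)) sums
      ((\<Sum>i\<le>n. of_int (eulerian_k (int N) n i) * x ^ (N + i + 1)) / (1 - x) ^ Suc n)"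
    by (simp add: f_def sum_distrib_left power_add mult_ac add_ac)
  have all: "f sums ((\<Sum>i\<le>n. of_nat (eulerian n i) * x ^ i) / (1 - x) ^ Suc n)"
    unfolding f_def by (rule sums_Suc_power_eulerian[OF assms])
  have "(\<Sum>j<N. f j) = suminf f - (\<Sum>l. f (l + N))"
    using suminf_split_initial_segment[OF sums_summable[OF all], of N] by simp
  then show ?thesis
    using sums_unique[OF all] sums_unique[OF tail]
    by (simp add: f_def sum_subtractf diff_divide_distrib)
qed

lemma real_power_le_const_times_power:
  fixes z :: real
  assumes "1 < z"
  obtains C where "\<And>l. real l ^ n \<le> C * z ^ l"
proof -
  have "summable (\<lambda>l. real l ^ n * (1 / z) ^ l)"
    using sums_shifted_powers_geometric[of "1 / z" "-1" n] assms by (simp add: sums_iff)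
  then have "Bseq (\<lambda>l. real l ^ n * (1 / z) ^ l)"
    by (intro convergent_imp_Bseq convergentI[OF summable_LIMSEQ_zero])
  then obtain C where C: "\<And>l. norm (real l ^ n * (1 / z) ^ l) \<le> C"
    by (auto simp: Bseq_def)
  have "real l ^ n \<le> C * z ^ l" for l
    using C[of l] assms by (simp add: power_one_over field_simps abs_le_iff)
  then show thesis by (rule that)
qed

section \<open>Moments of the geometric distribution\<close>

lemma sum_geometric_weights:
  fixes p :: real
  shows "(\<Sum>j<k. p ^ j * (1 - p)) = 1 - p ^ k"
  by (simp add: one_diff_power_eq sum_distrib_left mult.commute)

lemma sums_geometric_weights_power:
  fixes p z :: real
  assumes "0 \<le> p * z" "p * z < 1"
  shows "(\<lambda>j. p ^ j * (1 - p) * z ^ Suc j) sums ((1 - p) * z / (1 - p * z))"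
  using sums_mult[OF geometric_sums, of "p * z" "(1 - p) * z"] assms
  by (simp add: power_mult_distrib mult_ac)

(* For the number G of heads before the first tail, P(G = j) = p^j (1 - p); the two moments
   below are E((G + 1)^n) and E((G + 1)^n; G < k). *)
definition geometric_moment :: "real \<Rightarrow> nat \<Rightarrow> real" where
  "geometric_moment p n = (\<Sum>j. p ^ j * (1 - p) * (real j + 1) ^ n)"

definition truncated_geometric_moment :: "real \<Rightarrow> nat \<Rightarrow> nat \<Rightarrow> real" where
  "truncated_geometric_moment p k n = (\<Sum>j<k. p ^ j * (1 - p) * (real j + 1) ^ n)"

lemma sums_geometric_moment:
  assumes "0 < p" "p < 1"
  shows "(\<lambda>j. p ^ j * (1 - p) * (real j + 1) ^ n) sums geometric_moment p n"
proof -
  have "summable (\<lambda>j. (real j + 1) ^ n * p ^ j)"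
    using sums_shifted_powers_geometric[of p 0 n] assms by (simp add: sums_iff)
  then have "summable (\<lambda>j. (1 - p) * ((real j + 1) ^ n * p ^ j))"
    by (rule summable_mult)
  then show ?thesis
    unfolding geometric_moment_def by (simp add: summable_sums mult_ac)
qed

lemma geometric_moment_nonneg:
  assumes "0 < p" "p < 1"
  shows "0 \<le> geometric_moment p n"
  using assms sums_le[OF _ sums_zero sums_geometric_moment[OF assms]] by simp

lemma geometric_moment_div_power_eulerian:
  assumes "0 < p" "p < 1" "1 \<le> n"
  shows "geometric_moment p n / p ^ k = (\<Sum>i=0..n. real (eulerian n i) * p ^ i / ((1 - p) ^ n * p ^ (k + 1)))"
proof -
  define E where "E = (\<Sum>i\<le>n. real (eulerian n i) * p ^ i)"
  have "(\<lambda>j. p ^ j * (1 - p) * (real j + 1) ^ n) = (\<lambda>j. (1 - p) / p * ((real j + 1) ^ n * p ^ Suc j))"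
    using assms by (auto simp: field_simps)
  also have "\<dots> sums ((1 - p) / p * (E / (1 - p) ^ Suc n))"
    unfolding E_def using assms by (intro sums_mult sums_Suc_power_eulerian) auto
  finally have "geometric_moment p n = (1 - p) / p * (E / (1 - p) ^ Suc n)"
    by (rule sums_unique2[OF sums_geometric_moment[OF assms(1,2)]])
  then have "geometric_moment p n / p ^ k = (1 - p) / p * (E / (1 - p) ^ Suc n) / p ^ k"
    by simp
  also have "\<dots> = E / ((1 - p) ^ n * p ^ (k + 1))"
    using assms by (simp add: field_simps)
  finally have "geometric_moment p n / p ^ k = E / ((1 - p) ^ n * p ^ (k + 1))" .
  then show ?thesis
    by (simp add: E_def atMost_atLeast0 sum_divide_distrib)
qed

lemma truncated_geometric_moment_div_power_eulerian:
  assumes "0 < p" "p < 1" "1 \<le> m" "m \<le> N"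
  shows "truncated_geometric_moment p k m / p ^ k =
    (\<Sum>i=0..N. (real (eulerian m i) * p ^ i - real_of_int (eulerian_k (int k) m i) * p ^ (k + i + 1))
                / ((1 - p) ^ m * p ^ (k + 1)))"
proof -
  define S where "S = (\<Sum>i\<le>m. real (eulerian m i) * p ^ i - real_of_int (eulerian_k (int k) m i) * p ^ (k + i + 1))"
  have "truncated_geometric_moment p k m = (1 - p) / p * (\<Sum>j<k. (real j + 1) ^ m * p ^ Suc j)"
    unfolding truncated_geometric_moment_def sum_distrib_left
    using assms by (intro sum.cong refl) (simp add: field_simps)
  also have "\<dots> = (1 - p) / p * (S / (1 - p) ^ Suc m)"
    unfolding S_def using assms by (subst sum_lessThan_Suc_power_eulerian) auto
  finally have "truncated_geometric_moment p k m / p ^ k = (1 - p) / p * (S / (1 - p) ^ Suc m) / p ^ k"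
    by simp
  also have "\<dots> = S / ((1 - p) ^ m * p ^ (k + 1))"
    using assms by (simp add: field_simps)
  also have "\<dots> = (\<Sum>i=0..N. (real (eulerian m i) * p ^ i
      - real_of_int (eulerian_k (int k) m i) * p ^ (k + i + 1)) / ((1 - p) ^ m * p ^ (k + 1)))"
    unfolding S_def sum_divide_distrib atMost_atLeast0 using assms(4)
    by (intro sum.mono_neutral_left) (auto simp: eulerian_eq_0 eulerian_k_eq_0)
  finally show ?thesis .
qed

lemma truncated_geometric_moment_div_power:
  assumes "p \<noteq> 0"
  shows "truncated_geometric_moment p k m / p ^ k = (\<Sum>i=1..k. (1 - p) * real i ^ m / p ^ (k - i + 1))"
proof -
  have "p ^ j * (1 - p) * (real j + 1) ^ m / p ^ k = (1 - p) * real (Suc j) ^ m / p ^ (k - Suc j + 1)"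
    if "j < k" for j
  proof -
    from that have "k = j + (k - Suc j + 1)"
      by simp
    then have "p ^ k = p ^ j * p ^ (k - Suc j + 1)"
      by (metis power_add)
    then show ?thesis
      using assms by (simp add: field_simps)
  qed
  then show ?thesis
    by (simp add: truncated_geometric_moment_def sum_divide_distrib sum.atLeast1_atMost_eq)
qed

lemma geometric_moment_div_power:
  assumes "0 < p" "p < 1"
  shows "geometric_moment p n / p ^ k = (\<Sum>i. (1 - p) * real (Suc i) ^ n / p powi (int k - int (Suc i) + 1))"
proof -
  have "(1 - p) * real (Suc i) ^ n / p powi (int k - int (Suc i) + 1) = p ^ i * (1 - p) * (real i + 1) ^ n / p ^ k"
    for i
  proof -
    have pw: "p powi (int k - int (Suc i) + 1) = p ^ k / p ^ i"
      using assms by (simp add: power_int_diff)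
    show ?thesis
      unfolding pw using assms by (simp add: field_simps)
  qed
  then show ?thesis
    using sums_divide[OF sums_geometric_moment[OF assms], where c = "p ^ k"] by (simp add: sums_iff)
qed

section \<open>Streams starting with heads and a tail\<close>

definition heads_tail :: "nat \<Rightarrow> bool stream \<Rightarrow> bool stream" where
  "heads_tail j \<omega> = replicate j True @- False ## \<omega>"

lemma snth_heads_tail:
  "heads_tail j \<omega> !! t = (if t < j then True else if t = j then False else \<omega> !! (t - Suc j))"
proof (induction j arbitrary: t)
  case 0
  then show ?case by (cases t) (simp_all add: heads_tail_def)
next
  case (Suc j)
  then show ?case by (cases t) (simp_all add: heads_tail_def)
qed

definition hkt_ends_at :: "nat \<Rightarrow> bool stream \<Rightarrow> nat \<Rightarrow> bool" where
  "hkt_ends_at k \<omega> m \<longleftrightarrow> k + 1 \<le> m \<and> (\<forall>i<k. \<omega> !! (m - k - 1 + i)) \<and> \<not> \<omega> !! (m - 1)"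

lemma hkt_ends_at_iff_start:
  "hkt_ends_at k \<omega> m \<longleftrightarrow> (\<exists>s. m = s + k + 1 \<and> (\<forall>i<k. \<omega> !! (s + i)) \<and> \<not> \<omega> !! (s + k))"
proof
  assume "hkt_ends_at k \<omega> m"
  then show "\<exists>s. m = s + k + 1 \<and> (\<forall>i<k. \<omega> !! (s + i)) \<and> \<not> \<omega> !! (s + k)"
    unfolding hkt_ends_at_def by (intro exI[of _ "m - k - 1"]) auto
next
  assume "\<exists>s. m = s + k + 1 \<and> (\<forall>i<k. \<omega> !! (s + i)) \<and> \<not> \<omega> !! (s + k)"
  then show "hkt_ends_at k \<omega> m"
    unfolding hkt_ends_at_def by auto
qed

lemma hkt_ends_at_heads_tail:
  assumes "j < k"
  shows "hkt_ends_at k (heads_tail j \<omega>) m \<longleftrightarrow> j < m \<and> hkt_ends_at k \<omega> (m - Suc j)"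
proof -
  have start: "(\<forall>i<k. heads_tail j \<omega> !! (s + i)) \<and> \<not> heads_tail j \<omega> !! (s + k) \<longleftrightarrow>
      j < s \<and> (\<forall>i<k. \<omega> !! (s - Suc j + i)) \<and> \<not> \<omega> !! (s - Suc j + k)" for s
  proof (cases "j < s")
    case True
    then have "heads_tail j \<omega> !! (s + i) = \<omega> !! (s - Suc j + i)" for i
      by (simp add: snth_heads_tail)
    with True show ?thesis by simp
  next
    case False
    then have "j - s < k" "\<not> heads_tail j \<omega> !! (s + (j - s))"
      using assms by (auto simp: snth_heads_tail)
    with False show ?thesis by blast
  qed
  show ?thesis
  proof
    assume "hkt_ends_at k (heads_tail j \<omega>) m"
    then obtain s where "m = s + k + 1" "j < s" "\<forall>i<k. \<omega> !! (s - Suc j + i)" "\<not> \<omega> !! (s - Suc j + k)"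
      unfolding hkt_ends_at_iff_start start by blast
    then show "j < m \<and> hkt_ends_at k \<omega> (m - Suc j)"
      unfolding hkt_ends_at_iff_start by (intro conjI exI[of _ "s - Suc j"]) auto
  next
    assume "j < m \<and> hkt_ends_at k \<omega> (m - Suc j)"
    then obtain t where "j < m" "m - Suc j = t + k + 1" "\<forall>i<k. \<omega> !! (t + i)" "\<not> \<omega> !! (t + k)"
      unfolding hkt_ends_at_iff_start by blast
    then show "hkt_ends_at k (heads_tail j \<omega>) m"
      unfolding hkt_ends_at_iff_start start by (intro exI[of _ "t + Suc j"]) auto
  qed
qed

lemma hkt_time_eq_Least: "hkt_time k \<omega> = (LEAST m. hkt_ends_at k \<omega> m)"
  unfolding hkt_time_def hkt_ends_at_def ..

lemma hkt_ends_at_heads_tail_Suc: "k \<le> j \<Longrightarrow> hkt_ends_at k (heads_tail j \<omega>) (Suc j)"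
  by (auto simp: hkt_ends_at_def snth_heads_tail)

lemma hkt_time_heads_tail_ge:
  assumes "k \<le> j"
  shows "hkt_time k (heads_tail j \<omega>) = Suc j"
  unfolding hkt_time_eq_Least
proof (rule Least_equality)
  show "hkt_ends_at k (heads_tail j \<omega>) (Suc j)"
    using assms by (rule hkt_ends_at_heads_tail_Suc)
  show "Suc j \<le> m" if "hkt_ends_at k (heads_tail j \<omega>) m" for m
    using that by (auto simp: hkt_ends_at_def snth_heads_tail split: if_splits)
qed

lemma ex_hkt_ends_at_heads_tail:
  "j < k \<Longrightarrow> (\<exists>m. hkt_ends_at k (heads_tail j \<omega>) m) \<longleftrightarrow> (\<exists>m. hkt_ends_at k \<omega> m)"
  by (auto simp: hkt_ends_at_heads_tail intro: exI[of _ "_ + Suc j"])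

lemma hkt_time_heads_tail_less:
  assumes "j < k" "\<exists>m. hkt_ends_at k \<omega> m"
  shows "hkt_time k (heads_tail j \<omega>) = Suc j + hkt_time k \<omega>"
  unfolding hkt_time_eq_Least
proof (rule Least_equality)
  show "hkt_ends_at k (heads_tail j \<omega>) (Suc j + (LEAST m. hkt_ends_at k \<omega> m))"
    using assms LeastI_ex by (simp add: hkt_ends_at_heads_tail)
  show "Suc j + (LEAST m. hkt_ends_at k \<omega> m) \<le> m" if "hkt_ends_at k (heads_tail j \<omega>) m" for m
    using that Least_le[of "hkt_ends_at k \<omega>" "m - Suc j"] assms(1)
    by (auto simp: hkt_ends_at_heads_tail)
qed

lemma all_snth_Stream: "(\<forall>i. (x ## \<omega>) !! i) \<longleftrightarrow> x \<and> (\<forall>i. \<omega> !! i)"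
  using stream_all_Stream[of "\<lambda>b. b" x \<omega>] unfolding stream_all_def .

definition first_tail_at :: "nat \<Rightarrow> bool stream \<Rightarrow> bool" where
  "first_tail_at j \<omega> \<longleftrightarrow> (\<forall>i<j. \<omega> !! i) \<and> \<not> \<omega> !! j"

lemma first_tail_at_0_Stream [simp]: "first_tail_at 0 (x ## \<omega>) \<longleftrightarrow> \<not> x"
  by (simp add: first_tail_at_def)

lemma first_tail_at_Suc_Stream [simp]: "first_tail_at (Suc j) (x ## \<omega>) \<longleftrightarrow> x \<and> first_tail_at j \<omega>"
  by (auto simp: first_tail_at_def less_Suc_eq_0_disj)

lemma first_tail_at_iff_Least:
  assumes "\<exists>i. \<not> \<omega> !! i"
  shows "first_tail_at j \<omega> \<longleftrightarrow> j = (LEAST i. \<not> \<omega> !! i)"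
proof
  show "first_tail_at j \<omega> \<Longrightarrow> j = (LEAST i. \<not> \<omega> !! i)"
    unfolding first_tail_at_def by (intro Least_equality[symmetric]) (auto simp: not_less[symmetric])
  show "j = (LEAST i. \<not> \<omega> !! i) \<Longrightarrow> first_tail_at j \<omega>"
    using assms LeastI_ex[of "\<lambda>i. \<not> \<omega> !! i"] not_less_Least[of _ "\<lambda>i. \<not> \<omega> !! i"]
    by (auto simp: first_tail_at_def)
qed

section \<open>The first-tail decomposition of the coin-flip measure\<close>

lemma ennreal_le_affine_bound:
  fixes x :: ennreal
  assumes "x \<noteq> \<top>" "x \<le> ennreal a * x + ennreal b" "0 \<le> a" "a < 1" "0 \<le> b"
  shows "x \<le> ennreal (b / (1 - a))"
proof -
  obtain r where r: "x = ennreal r" "0 \<le> r"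
    using assms(1) by (cases x rule: ennreal_cases) auto
  with assms have "ennreal r \<le> ennreal (a * r + b)"
    by (simp add: ennreal_mult' ennreal_plus)
  then have "r \<le> a * r + b"
    using assms r by (subst (asm) ennreal_le_iff) auto
  then have "r * (1 - a) \<le> b"
    by (simp add: algebra_simps)
  with assms r show ?thesis
    by (simp add: pos_le_divide_eq ennreal_leI)
qed

lemma measurable_snth_pmf [measurable]:
  "Measurable.pred (stream_space (measure_pmf P)) (\<lambda>\<omega>. \<omega> !! n)"
  using measurable_snth[of n "measure_pmf P"] by (simp add: measurable_cong_sets)

lemma measurable_hkt_ends_at [measurable]:
  "Measurable.pred (stream_space (measure_pmf P)) (\<lambda>\<omega>. hkt_ends_at k \<omega> m)"
  unfolding hkt_ends_at_def by measurable

lemma measurable_hkt_time [measurable]: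
  "hkt_time k \<in> measurable (stream_space (measure_pmf P)) (count_space UNIV)"
  unfolding hkt_time_eq_Least by measurable

lemma measurable_first_tail_at [measurable]:
  "Measurable.pred (stream_space (measure_pmf P)) (first_tail_at j)"
  unfolding first_tail_at_def by measurable

lemma measurable_heads_tail [measurable]:
  "heads_tail j \<in> measurable (stream_space (measure_pmf P)) (stream_space (measure_pmf P))"
  unfolding heads_tail_def by (induction j) simp_all

locale bernoulli_stream =
  fixes p :: real
  assumes p_pos: "0 < p" and p_less_1: "p < 1"
begin

abbreviation coins :: "bool stream measure" where
  "coins \<equiv> stream_space (measure_pmf (bernoulli_pmf p))"

sublocale coins: prob_space coins
  by (rule prob_space.prob_space_stream_space) (rule prob_space_measure_pmf)

lemma nn_integral_coins_Stream:
  assumes [measurable]: "f \<in> borel_measurable coins"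
  shows "(\<integral>\<^sup>+\<omega>. f \<omega> \<partial>coins) =
    ennreal p * (\<integral>\<^sup>+\<omega>. f (True ## \<omega>) \<partial>coins) + ennreal (1 - p) * (\<integral>\<^sup>+\<omega>. f (False ## \<omega>) \<partial>coins)"
proof -
  have "(\<integral>\<^sup>+\<omega>. f \<omega> \<partial>coins) =
      (\<integral>\<^sup>+x. (\<integral>\<^sup>+\<omega>. f (x ## \<omega>) \<partial>coins) \<partial>measure_pmf (bernoulli_pmf p))"
    by (rule prob_space.nn_integral_stream_space[OF prob_space_measure_pmf]) simp
  also have "\<dots> = ennreal p * (\<integral>\<^sup>+\<omega>. f (True ## \<omega>) \<partial>coins) + ennreal (1 - p) * (\<integral>\<^sup>+\<omega>. f (False ## \<omega>) \<partial>coins)"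
    using p_pos p_less_1 by (subst nn_integral_bernoulli_pmf) (auto simp: mult.commute)
  finally show ?thesis .
qed

lemma nn_integral_first_tail_at:
  assumes "f \<in> borel_measurable coins"
  shows "(\<integral>\<^sup>+\<omega>. (if first_tail_at j \<omega> then f \<omega> else 0) \<partial>coins) =
    ennreal (p ^ j * (1 - p)) * (\<integral>\<^sup>+\<omega>. f (heads_tail j \<omega>) \<partial>coins)"
  using assms
proof (induction j arbitrary: f)
  case 0
  then show ?case
    by (subst nn_integral_coins_Stream) (simp_all add: heads_tail_def)
next
  case (Suc j)
  note [measurable] = Suc.prems
  have "(\<integral>\<^sup>+\<omega>. (if first_tail_at (Suc j) \<omega> then f \<omega> else 0) \<partial>coins) =
      ennreal p * (\<integral>\<^sup>+\<omega>. (if first_tail_at j \<omega> then f (True ## \<omega>) else 0) \<partial>coins)"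
    by (subst nn_integral_coins_Stream) simp_all
  also have "\<dots> = ennreal p * (ennreal (p ^ j * (1 - p)) * (\<integral>\<^sup>+\<omega>. f (True ## heads_tail j \<omega>) \<partial>coins))"
    by (subst Suc.IH) simp_all
  also have "\<dots> = ennreal (p ^ Suc j * (1 - p)) * (\<integral>\<^sup>+\<omega>. f (heads_tail (Suc j) \<omega>) \<partial>coins)"
    using p_pos p_less_1 by (simp add: heads_tail_def ennreal_mult' mult.assoc)
  finally show ?case .
qed

lemma AE_eq_0_if_nn_integral_le_mult:
  assumes [measurable]: "f \<in> borel_measurable coins" and "\<And>\<omega>. f \<omega> \<le> 1"
    and "(\<integral>\<^sup>+\<omega>. f \<omega> \<partial>coins) \<le> ennreal a * (\<integral>\<^sup>+\<omega>. f \<omega> \<partial>coins)" and "0 \<le> a" "a < 1"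
  shows "AE \<omega> in coins. f \<omega> = 0"
proof -
  have "(\<integral>\<^sup>+\<omega>. f \<omega> \<partial>coins) \<le> (\<integral>\<^sup>+\<omega>. 1 \<partial>coins)"
    using assms(2) by (intro nn_integral_mono)
  then have "(\<integral>\<^sup>+\<omega>. f \<omega> \<partial>coins) \<noteq> \<top>"
    by (auto simp: coins.emeasure_space_1 top_unique)
  then have "(\<integral>\<^sup>+\<omega>. f \<omega> \<partial>coins) \<le> ennreal (0 / (1 - a))"
    using assms(3-) by (intro ennreal_le_affine_bound) auto
  then show ?thesis
    by (simp add: nn_integral_0_iff_AE)
qed

lemma AE_eventually_tail: "AE \<omega> in coins. \<exists>i. \<not> \<omega> !! i"
proof -
  define f where "f \<omega> = (if \<forall>i. \<omega> !! i then 1 else 0 :: ennreal)" for \<omega>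
  have [measurable]: "f \<in> borel_measurable coins"
    unfolding f_def by measurable
  have "f (True ## \<omega>) = f \<omega>" "f (False ## \<omega>) = 0" for \<omega>
    by (simp_all add: f_def all_snth_Stream)
  then have "(\<integral>\<^sup>+\<omega>. f \<omega> \<partial>coins) \<le> ennreal p * (\<integral>\<^sup>+\<omega>. f \<omega> \<partial>coins)"
    by (subst nn_integral_coins_Stream) simp_all
  then have "AE \<omega> in coins. f \<omega> = 0"
    using p_pos p_less_1 by (intro AE_eq_0_if_nn_integral_le_mult[where a = p]) (auto simp: f_def)
  then show ?thesis
    by eventually_elim (auto simp: f_def split: if_splits)
qed

lemma nn_integral_first_tail:
  assumes [measurable]: "f \<in> borel_measurable coins"
  shows "(\<integral>\<^sup>+\<omega>. f \<omega> \<partial>coins) = (\<Sum>j. ennreal (p ^ j * (1 - p)) * (\<integral>\<^sup>+\<omega>. f (heads_tail j \<omega>) \<partial>coins))"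
proof -
  have "AE \<omega> in coins. f \<omega> = (\<Sum>j. if first_tail_at j \<omega> then f \<omega> else 0)"
    using AE_eventually_tail
  proof eventually_elim
    case (elim \<omega>)
    then show ?case
      using sums_single[of "LEAST i. \<not> \<omega> !! i" "\<lambda>_. f \<omega>"]
      by (simp add: first_tail_at_iff_Least sums_iff)
  qed
  then have "(\<integral>\<^sup>+\<omega>. f \<omega> \<partial>coins) = (\<integral>\<^sup>+\<omega>. (\<Sum>j. if first_tail_at j \<omega> then f \<omega> else 0) \<partial>coins)"
    by (rule nn_integral_cong_AE)
  also have "\<dots> = (\<Sum>j. \<integral>\<^sup>+\<omega>. (if first_tail_at j \<omega> then f \<omega> else 0) \<partial>coins)"
    by (rule nn_integral_suminf) measurable
  finally show ?thesis
    by (simp add: nn_integral_first_tail_at)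
qed

lemma AE_hkt_occurs: "AE \<omega> in coins. \<exists>m. hkt_ends_at k \<omega> m"
proof -
  define f where "f \<omega> = (if \<exists>m. hkt_ends_at k \<omega> m then 0 else 1 :: ennreal)" for \<omega>
  have [measurable]: "f \<in> borel_measurable coins"
    unfolding f_def by measurable
  have "f (heads_tail j \<omega>) = (if j < k then f \<omega> else 0)" for j \<omega>
    using hkt_ends_at_heads_tail_Suc[of k j \<omega>] ex_hkt_ends_at_heads_tail[of j k \<omega>]
    by (cases "j < k") (auto simp: f_def)
  then have "(\<integral>\<^sup>+\<omega>. f (heads_tail j \<omega>) \<partial>coins) = (if j < k then \<integral>\<^sup>+\<omega>. f \<omega> \<partial>coins else 0)" for j
    by (cases "j < k") simp_all
  then have "(\<integral>\<^sup>+\<omega>. f \<omega> \<partial>coins) = (\<Sum>j. ennreal (p ^ j * (1 - p)) * (if j < k then \<integral>\<^sup>+\<omega>. f \<omega> \<partial>coins else 0))"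
    by (subst nn_integral_first_tail) simp_all
  also have "\<dots> = (\<Sum>j<k. ennreal (p ^ j * (1 - p)) * (\<integral>\<^sup>+\<omega>. f \<omega> \<partial>coins))"
    by (subst suminf_finite[of "{..<k}"]) auto
  also have "\<dots> = (\<Sum>j<k. ennreal (p ^ j * (1 - p))) * (\<integral>\<^sup>+\<omega>. f \<omega> \<partial>coins)"
    by (simp only: sum_distrib_right)
  also have "\<dots> = ennreal (1 - p ^ k) * (\<integral>\<^sup>+\<omega>. f \<omega> \<partial>coins)"
    using p_pos p_less_1 by (subst sum_ennreal) (auto simp: sum_geometric_weights)
  finally have "AE \<omega> in coins. f \<omega> = 0"
    using p_pos p_less_1
    by (intro AE_eq_0_if_nn_integral_le_mult[where a = "1 - p ^ k"]) (auto simp: f_def power_le_one)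
  then show ?thesis
    by eventually_elim (auto simp: f_def split: if_splits)
qed

lemma nn_integral_hkt_time:
  "(\<integral>\<^sup>+\<omega>. g (hkt_time k \<omega>) \<partial>coins) =
    (\<Sum>j. ennreal (p ^ j * (1 - p)) *
      (if j < k then \<integral>\<^sup>+\<omega>. g (Suc j + hkt_time k \<omega>) \<partial>coins else g (Suc j)))"
proof -
  have "(\<integral>\<^sup>+\<omega>. g (hkt_time k (heads_tail j \<omega>)) \<partial>coins) =
      (if j < k then \<integral>\<^sup>+\<omega>. g (Suc j + hkt_time k \<omega>) \<partial>coins else g (Suc j))" for j
  proof (cases "j < k")
    case True
    have "AE \<omega> in coins. g (hkt_time k (heads_tail j \<omega>)) = g (Suc j + hkt_time k \<omega>)"
      using AE_hkt_occurs[of k] by eventually_elim (simp add: hkt_time_heads_tail_less True)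
    with True show ?thesis
      by (simp add: nn_integral_cong_AE)
  next
    case False
    then show ?thesis
      by (simp add: hkt_time_heads_tail_ge coins.emeasure_space_1)
  qed
  then show ?thesis
    by (subst nn_integral_first_tail) simp_all
qed

lemma exists_exp_moment_base: "\<exists>z>1. p * z < 1 \<and> (1 - p ^ k) * z ^ k < 1"
proof -
  have "((\<lambda>z. p * z) \<longlongrightarrow> p) (at_right 1)" "((\<lambda>z. (1 - p ^ k) * z ^ k) \<longlongrightarrow> 1 - p ^ k) (at_right 1)"
    by (auto intro!: tendsto_eq_intros)
  moreover have "p < 1" "1 - p ^ k < 1"
    using p_pos p_less_1 by auto
  ultimately have "\<forall>\<^sub>F z in at_right 1. 1 < z \<and> p * z < 1 \<and> (1 - p ^ k) * z ^ k < 1"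
    by (intro eventually_conj eventually_at_right_less order_tendstoD(2))
  then show ?thesis
    using eventually_happens[of _ "at_right (1::real)"] by force
qed

lemma nn_integral_exp_min_shifted_hkt_time_le:
  assumes "1 \<le> z" "j < k"
  shows "(\<integral>\<^sup>+\<omega>. ennreal (z ^ min (Suc j + hkt_time k \<omega>) N) \<partial>coins)
    \<le> ennreal (z ^ k) * (\<integral>\<^sup>+\<omega>. ennreal (z ^ min (hkt_time k \<omega>) N) \<partial>coins)"
proof -
  have "ennreal (z ^ min (Suc j + hkt_time k \<omega>) N) \<le> ennreal (z ^ k) * ennreal (z ^ min (hkt_time k \<omega>) N)" for \<omega>
  proof -
    have "z ^ min (Suc j + hkt_time k \<omega>) N \<le> z ^ (k + min (hkt_time k \<omega>) N)"
      using assms by (intro power_increasing) auto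
    then show ?thesis
      using assms by (simp add: power_add ennreal_mult[symmetric])
  qed
  then have "(\<integral>\<^sup>+\<omega>. ennreal (z ^ min (Suc j + hkt_time k \<omega>) N) \<partial>coins)
      \<le> (\<integral>\<^sup>+\<omega>. ennreal (z ^ k) * ennreal (z ^ min (hkt_time k \<omega>) N) \<partial>coins)"
    by (intro nn_integral_mono)
  also have "\<dots> = ennreal (z ^ k) * (\<integral>\<^sup>+\<omega>. ennreal (z ^ min (hkt_time k \<omega>) N) \<partial>coins)"
    by (rule nn_integral_cmult) measurable
  finally show ?thesis .
qed

lemma nn_integral_exp_min_hkt_time_le_affine:
  fixes k N :: nat
  assumes "1 \<le> z" "p * z < 1"
  defines "c \<equiv> (\<integral>\<^sup>+\<omega>. ennreal (z ^ min (hkt_time k \<omega>) N) \<partial>coins)"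
  shows "c \<le> ennreal ((1 - p ^ k) * z ^ k) * c + ennreal ((1 - p) * z / (1 - p * z))"
proof -
  have summand_le: "(if j < k then \<integral>\<^sup>+\<omega>. ennreal (z ^ min (Suc j + hkt_time k \<omega>) N) \<partial>coins
      else ennreal (z ^ min (Suc j) N))
    \<le> (if j < k then ennreal (z ^ k) * c else 0) + ennreal (z ^ Suc j)" for j
  proof (cases "j < k")
    case True
    then show ?thesis
      using nn_integral_exp_min_shifted_hkt_time_le[OF assms(1) True, of N]
      by (simp add: c_def add_increasing2)
  next
    case False
    have "z ^ min (Suc j) N \<le> z ^ Suc j"
      using assms by (intro power_increasing) auto
    with False show ?thesis
      by (simp add: ennreal_leI del: power_Suc)
  qed
  have "c = (\<Sum>j. ennreal (p ^ j * (1 - p)) *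
      (if j < k then \<integral>\<^sup>+\<omega>. ennreal (z ^ min (Suc j + hkt_time k \<omega>) N) \<partial>coins
       else ennreal (z ^ min (Suc j) N)))"
    unfolding c_def by (rule nn_integral_hkt_time)
  also have "\<dots> \<le> (\<Sum>j. ennreal (p ^ j * (1 - p)) * ((if j < k then ennreal (z ^ k) * c else 0) + ennreal (z ^ Suc j)))"
    by (intro suminf_le summableI mult_left_mono summand_le) auto
  also have "\<dots> = (\<Sum>j. ennreal (p ^ j * (1 - p)) * (if j < k then ennreal (z ^ k) * c else 0))
      + (\<Sum>j. ennreal (p ^ j * (1 - p)) * ennreal (z ^ Suc j))"
    by (simp only: distrib_left suminf_add[OF summableI summableI])
  also have "(\<Sum>j. ennreal (p ^ j * (1 - p)) * (if j < k then ennreal (z ^ k) * c else 0))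
      = (\<Sum>j<k. ennreal (p ^ j * (1 - p))) * (ennreal (z ^ k) * c)"
    by (subst suminf_finite[of "{..<k}"]) (auto simp: sum_distrib_right)
  also have "\<dots> = ennreal ((1 - p ^ k) * z ^ k) * c"
    using p_pos p_less_1 assms
    by (subst sum_ennreal) (auto simp: sum_geometric_weights ennreal_mult power_le_one mult.assoc)
  also have "(\<Sum>j. ennreal (p ^ j * (1 - p)) * ennreal (z ^ Suc j)) = (\<Sum>j. ennreal (p ^ j * (1 - p) * z ^ Suc j))"
    using p_pos p_less_1 assms by (simp add: ennreal_mult del: power_Suc)
  also have "\<dots> = ennreal ((1 - p) * z / (1 - p * z))"
    using p_pos p_less_1 assms
    by (intro suminf_ennreal_eq sums_geometric_weights_power) auto
  finally show ?thesis .
qed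

lemma nn_integral_exp_hkt_time_finite: "\<exists>z>1. (\<integral>\<^sup>+\<omega>. ennreal (z ^ hkt_time k \<omega>) \<partial>coins) < \<top>"
proof -
  obtain z where z: "1 < z" "p * z < 1" "(1 - p ^ k) * z ^ k < 1"
    using exists_exp_moment_base by blast
  \<comment> \<open>Truncating at \<open>N\<close> makes the integral finite, so the affine inequality can be solved for it.\<close>
  have trunc: "(\<integral>\<^sup>+\<omega>. ennreal (z ^ min (hkt_time k \<omega>) N) \<partial>coins)
      \<le> ennreal ((1 - p) * z / (1 - p * z) / (1 - (1 - p ^ k) * z ^ k))" for N
  proof (rule ennreal_le_affine_bound)
    have "(\<integral>\<^sup>+\<omega>. ennreal (z ^ min (hkt_time k \<omega>) N) \<partial>coins) \<le> (\<integral>\<^sup>+\<omega>. ennreal (z ^ N) \<partial>coins)"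
      using z by (intro nn_integral_mono ennreal_leI power_increasing) auto
    then show "(\<integral>\<^sup>+\<omega>. ennreal (z ^ min (hkt_time k \<omega>) N) \<partial>coins) \<noteq> \<top>"
      by (auto simp: coins.emeasure_space_1 top_unique)
  qed (use z p_pos p_less_1 nn_integral_exp_min_hkt_time_le_affine in \<open>auto simp: power_le_one\<close>)
  have "ennreal (z ^ hkt_time k \<omega>) = (SUP N. ennreal (z ^ min (hkt_time k \<omega>) N))" for \<omega>
    using z by (intro antisym SUP_upper2[of "hkt_time k \<omega>"] SUP_least ennreal_leI power_increasing) auto
  then have "(\<integral>\<^sup>+\<omega>. ennreal (z ^ hkt_time k \<omega>) \<partial>coins)
      = (\<integral>\<^sup>+\<omega>. (SUP N. ennreal (z ^ min (hkt_time k \<omega>) N)) \<partial>coins)"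
    by simp
  also have "\<dots> = (SUP N. \<integral>\<^sup>+\<omega>. ennreal (z ^ min (hkt_time k \<omega>) N) \<partial>coins)"
    using z by (intro nn_integral_monotone_convergence_SUP)
      (auto simp: incseq_def le_fun_def intro!: ennreal_leI power_increasing)
  also have "\<dots> < \<top>"
    using trunc by (intro le_less_trans[OF SUP_least]) auto
  finally show ?thesis
    using z by blast
qed

lemma integrable_hkt_time_power: "integrable coins (\<lambda>\<omega>. real (hkt_time k \<omega>) ^ n)"
proof -
  obtain z where z: "1 < z" "(\<integral>\<^sup>+\<omega>. ennreal (z ^ hkt_time k \<omega>) \<partial>coins) < \<top>"
    using nn_integral_exp_hkt_time_finite by blast
  obtain C where C: "\<And>l. real l ^ n \<le> C * z ^ l"
    using real_power_le_const_times_power[OF z(1)] by blast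
  have "0 \<le> C"
    using C[of 0] by (cases n) auto
  have "(\<integral>\<^sup>+\<omega>. ennreal (real (hkt_time k \<omega>) ^ n) \<partial>coins) \<le> (\<integral>\<^sup>+\<omega>. ennreal C * ennreal (z ^ hkt_time k \<omega>) \<partial>coins)"
    using C z \<open>0 \<le> C\<close> by (intro nn_integral_mono) (simp add: ennreal_mult[symmetric] ennreal_leI)
  also have "\<dots> = ennreal C * (\<integral>\<^sup>+\<omega>. ennreal (z ^ hkt_time k \<omega>) \<partial>coins)"
    by (rule nn_integral_cmult) measurable
  also have "\<dots> < \<top>"
    using z by (simp add: ennreal_mult_less_top)
  finally show ?thesis
    by (intro integrableI_nonneg) auto
qed

definition hkt_moment :: "nat \<Rightarrow> nat \<Rightarrow> real" where
  "hkt_moment k n = (\<integral>\<omega>. real (hkt_time k \<omega>) ^ n \<partial>coins)"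

lemma hkt_moment_0: "hkt_moment k 0 = 1"
  by (simp add: hkt_moment_def coins.prob_space)

lemma hkt_moment_nonneg: "0 \<le> hkt_moment k n"
  by (simp add: hkt_moment_def)

lemma nn_integral_shifted_hkt_time_power:
  "(\<integral>\<^sup>+\<omega>. ennreal (real (c + hkt_time k \<omega>) ^ n) \<partial>coins) =
    ennreal (\<Sum>i\<le>n. real (n choose i) * real c ^ (n - i) * hkt_moment k i)"
proof -
  have binomial: "real (c + m) ^ n = (\<Sum>i\<le>n. real (n choose i) * real c ^ (n - i) * real m ^ i)" for m
  proof -
    have "real (c + m) ^ n = (real m + real c) ^ n"
      by (simp add: add.commute)
    also have "\<dots> = (\<Sum>i\<le>n. real (n choose i) * real c ^ (n - i) * real m ^ i)"
      by (simp add: binomial_ring mult_ac)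
    finally show ?thesis .
  qed
  have integrable: "integrable coins (\<lambda>\<omega>. \<Sum>i\<le>n. real (n choose i) * real c ^ (n - i) * real (hkt_time k \<omega>) ^ i)"
    by (intro Bochner_Integration.integrable_sum integrable_mult_right integrable_hkt_time_power)
  have "(\<integral>\<^sup>+\<omega>. ennreal (real (c + hkt_time k \<omega>) ^ n) \<partial>coins) =
      ennreal (\<integral>\<omega>. (\<Sum>i\<le>n. real (n choose i) * real c ^ (n - i) * real (hkt_time k \<omega>) ^ i) \<partial>coins)"
    unfolding binomial by (rule nn_integral_eq_integral[OF integrable]) (auto intro!: sum_nonneg)
  also have "\<dots> = ennreal (\<Sum>i\<le>n. real (n choose i) * real c ^ (n - i) * hkt_moment k i)"
    by (simp add: integral_sum integrable_hkt_time_power hkt_moment_def)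
  finally show ?thesis .
qed

lemma hkt_moment_first_step:
  "hkt_moment k n = geometric_moment p n +
    (\<Sum>j<k. p ^ j * (1 - p) * (\<Sum>i=1..n. real (n choose i) * (real j + 1) ^ (n - i) * hkt_moment k i))"
proof -
  define R where "R j = (\<Sum>i=1..n. real (n choose i) * (real j + 1) ^ (n - i) * hkt_moment k i)" for j
  define w where "w j = p ^ j * (1 - p)" for j
  have w: "0 \<le> w j" for j
    using p_pos p_less_1 by (simp add: w_def)
  have R: "0 \<le> R j" for j
    by (auto simp: R_def hkt_moment_nonneg intro!: sum_nonneg)
  have wR: "0 \<le> (\<Sum>j<k. w j * R j)"
    by (intro sum_nonneg mult_nonneg_nonneg w R)
  have shifted: "(\<integral>\<^sup>+\<omega>. ennreal (real (Suc j + hkt_time k \<omega>) ^ n) \<partial>coins) = ennreal ((real j + 1) ^ n + R j)" for j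
    unfolding nn_integral_shifted_hkt_time_power atMost_atLeast0 R_def
    by (simp add: sum.atLeast_Suc_atMost hkt_moment_0 add.commute)
  have "ennreal (hkt_moment k n) = (\<integral>\<^sup>+\<omega>. ennreal (real (hkt_time k \<omega>) ^ n) \<partial>coins)"
    unfolding hkt_moment_def by (rule nn_integral_eq_integral[symmetric]) (auto intro: integrable_hkt_time_power)
  also have "\<dots> = (\<Sum>j. ennreal (w j) * (if j < k then \<integral>\<^sup>+\<omega>. ennreal (real (Suc j + hkt_time k \<omega>) ^ n) \<partial>coins
      else ennreal (real (Suc j) ^ n)))"
    unfolding w_def by (rule nn_integral_hkt_time)
  also have "\<dots> = (\<Sum>j. ennreal (w j) * (if j < k then ennreal ((real j + 1) ^ n + R j) else ennreal ((real j + 1) ^ n)))"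
    unfolding shifted of_nat_Suc by (simp only: add.commute)
  also have "\<dots> = (\<Sum>j. ennreal (w j * (real j + 1) ^ n)) + (\<Sum>j. if j < k then ennreal (w j * R j) else 0)"
    using w R by (subst suminf_add[OF summableI summableI]) (auto intro!: suminf_cong simp: ennreal_mult distrib_left)
  also have "(\<Sum>j. ennreal (w j * (real j + 1) ^ n)) = ennreal (geometric_moment p n)"
    using w sums_geometric_moment[OF p_pos p_less_1, of n] unfolding w_def
    by (intro suminf_ennreal_eq) auto
  also have "(\<Sum>j. if j < k then ennreal (w j * R j) else 0) = ennreal (\<Sum>j<k. w j * R j)"
    using w R by (subst suminf_finite[of "{..<k}"]) auto
  also have "ennreal (geometric_moment p n) + ennreal (\<Sum>j<k. w j * R j) =
      ennreal (geometric_moment p n + (\<Sum>j<k. w j * R j))"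
    using geometric_moment_nonneg[OF p_pos p_less_1] wR by (rule ennreal_plus[symmetric])
  finally have "ennreal (hkt_moment k n) = ennreal (geometric_moment p n + (\<Sum>j<k. w j * R j))" .
  then have "hkt_moment k n = geometric_moment p n + (\<Sum>j<k. w j * R j)"
    using geometric_moment_nonneg[OF p_pos p_less_1] wR
    by (subst (asm) ennreal_inj) (auto intro: hkt_moment_nonneg)
  then show ?thesis
    by (simp add: w_def R_def)
qed

lemma hkt_moment_recurrence:
  assumes "1 \<le> n"
  shows "hkt_moment k n =
    (\<Sum>i=1..n-1. real (n choose i) * hkt_moment k i * (truncated_geometric_moment p k (n - i) / p ^ k))
    + geometric_moment p n / p ^ k"
proof -
  define X where "X i = truncated_geometric_moment p k (n - i)" for i
  have "(\<Sum>j<k. p ^ j * (1 - p) * (\<Sum>i=1..n. real (n choose i) * (real j + 1) ^ (n - i) * hkt_moment k i))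
      = (\<Sum>i=1..n. real (n choose i) * hkt_moment k i * X i)"
    by (simp add: X_def truncated_geometric_moment_def sum_distrib_left sum_distrib_right mult_ac
        sum.swap[of _ "{..<k}"])
  also have "\<dots> = (\<Sum>i=1..n-1. real (n choose i) * hkt_moment k i * X i) + (1 - p ^ k) * hkt_moment k n"
    using assms by (cases n) (simp_all add: X_def truncated_geometric_moment_def sum_geometric_weights)
  finally have eq: "p ^ k * hkt_moment k n = (\<Sum>i=1..n-1. real (n choose i) * hkt_moment k i * X i) + geometric_moment p n"
    using hkt_moment_first_step[of k n] by (simp add: algebra_simps)
  have "hkt_moment k n = (p ^ k * hkt_moment k n) / p ^ k"
    using p_pos by simp
  also have "\<dots> = (\<Sum>i=1..n-1. real (n choose i) * hkt_moment k i * (X i / p ^ k)) + geometric_moment p n / p ^ k"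
    unfolding eq by (simp add: add_divide_distrib sum_divide_distrib)
  finally show ?thesis
    unfolding X_def .
qed

end

theorem theorem3p4:
  fixes p :: real and k :: nat
  assumes "0 < p" and "p < 1" and "1 \<le> k"
  defines "M \<equiv> stream_space (measure_pmf (bernoulli_pmf p))"
  shows "(\<integral>\<omega>. real (hkt_time k \<omega>) ^ 0 \<partial>M) = 1 \<and>
    (\<forall>n\<ge>1.
      (\<integral>\<omega>. real (hkt_time k \<omega>) ^ n \<partial>M) =
        (\<Sum>j=1..n-1. real (n choose j) * (\<integral>\<omega>. real (hkt_time k \<omega>) ^ j \<partial>M) *
            (\<Sum>i=1..k. (1 - p) * real i ^ (n - j) / p ^ (k - i + 1)))
        + (\<Sum>i. (1 - p) * real (Suc i) ^ n / p powi (int k - int (Suc i) + 1))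
    \<and>
      (\<integral>\<omega>. real (hkt_time k \<omega>) ^ n \<partial>M) =
        (\<Sum>j=1..n-1. real (n choose j) * (\<integral>\<omega>. real (hkt_time k \<omega>) ^ j \<partial>M) *
            (\<Sum>i=0..n. (real (eulerian (n - j) i) * p ^ i
                          - real_of_int (eulerian_k (int k) (n - j) i) * p ^ (k + i + 1))
                        / ((1 - p) ^ (n - j) * p ^ (k + 1))))
        + (\<Sum>i=0..n. real (eulerian n i) * p ^ i / ((1 - p) ^ n * p ^ (k + 1))))"
proof -
  interpret bernoulli_stream p
    using assms(1,2) by unfold_locales
  have moment: "(\<integral>\<omega>. real (hkt_time k \<omega>) ^ n \<partial>M) = hkt_moment k n" for n
    by (simp add: M_def hkt_moment_def)
  have "hkt_moment k n =
      (\<Sum>j=1..n-1. real (n choose j) * hkt_moment k j *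
          (\<Sum>i=0..n. (real (eulerian (n - j) i) * p ^ i
                        - real_of_int (eulerian_k (int k) (n - j) i) * p ^ (k + i + 1))
                      / ((1 - p) ^ (n - j) * p ^ (k + 1))))
      + (\<Sum>i=0..n. real (eulerian n i) * p ^ i / ((1 - p) ^ n * p ^ (k + 1)))" if "1 \<le> n" for n
    unfolding hkt_moment_recurrence[OF that] geometric_moment_div_power_eulerian[OF assms(1,2) that]
    by (intro arg_cong2[where f = "(+)"] sum.cong refl)
      (subst truncated_geometric_moment_div_power_eulerian[OF assms(1,2), where N = n]; auto)
  then show ?thesis
    unfolding moment using assms(1,2)
    by (simp add: hkt_moment_0 hkt_moment_recurrence truncated_geometric_moment_div_power geometric_moment_div_power)
qed

end
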